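(* Let $2\le k_1<k_2<\dots<k_m\le n$ ($m\ge1$) and integers $1\le i_{k_j}\le k_j-1$ with $\operatorname{maj}:=\sum_{j=1}^m i_{k_j}\le k_1$. Let $\pi_1=t_{k_1}^{i_{k_1}}\cdot t_{k_2}^{i_{k_2}}\cdots t_{k_m}^{i_{k_m}}\in D_n$ and let $q$ be an integer with $k_m\le q\le n-1$. Then $$\pi_1\cdot w_q=\begin{cases} w_q\cdot \pi_1 & \text{if } \operatorname{maj}=k_1,\\ w_{\operatorname{maj}}\cdot w_q\cdot \pi_1 & \text{if } \operatorname{maj}<k_1.\end{cases}$$
   Context: $D_n$ ($n\ge 2$) is the Coxeter group with generators $s_{1'},s_1,\dots,s_{n-1}$ and relations $s^2=1$, $(s_i s_{i+1})^3=1$, $(s_is_j)^2=1$ for $|i-j|\ge 2$, $(s_{1'}s_2)^3=1$, $(s_{1'}s_i)^2=1$ for $i\ne 2$. For $2\le k\le n$, $t_k=s_1s_2\cdots s_{k-1}$; for $1\le k\le n-1$, $w_k=s_k s_{k-1}\cdots s_2 s_1 s_{1'} s_2\cdots s_k$. (The hypothesis $\sum_j i_{k_j}\le k_1$ says that $\pi_1$, viewed in $S_n$, is a "standard OGS elementary element", and $\operatorname{maj}$ is its major index.) *)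

theory Defs
  imports "HOL-Algebra.Group"
begin

text \<open>Generators of D_n are given as a map s :: nat => 'a, where index 0 stands
for s_{1'} and index i (1 <= i <= n-1) stands for s_i.\<close>

definition gprod :: "('a, 'b) monoid_scheme \<Rightarrow> 'a list \<Rightarrow> 'a" where
  "gprod G xs = foldr (\<lambda>x y. x \<otimes>\<^bsub>G\<^esub> y) xs \<one>\<^bsub>G\<^esub>"

definition Dn_gens :: "('a, 'b) monoid_scheme \<Rightarrow> nat \<Rightarrow> (nat \<Rightarrow> 'a) \<Rightarrow> bool" where
  "Dn_gens G n s \<longleftrightarrow>
     (\<forall>i\<le>n-1. s i \<in> carrier G \<and> s i \<otimes>\<^bsub>G\<^esub> s i = \<one>\<^bsub>G\<^esub>) \<and>
     (\<forall>i. 1 \<le> i \<and> i + 1 \<le> n - 1 \<longrightarrow> (s i \<otimes>\<^bsub>G\<^esub> s (i+1)) [^]\<^bsub>G\<^esub> (3::nat) = \<one>\<^bsub>G\<^esub>) \<and>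
     (\<forall>i j. 1 \<le> i \<and> i \<le> n - 1 \<and> 1 \<le> j \<and> j \<le> n - 1 \<and> i + 2 \<le> j \<longrightarrow>
          (s i \<otimes>\<^bsub>G\<^esub> s j) [^]\<^bsub>G\<^esub> (2::nat) = \<one>\<^bsub>G\<^esub>) \<and>
     (2 \<le> n - 1 \<longrightarrow> (s 0 \<otimes>\<^bsub>G\<^esub> s 2) [^]\<^bsub>G\<^esub> (3::nat) = \<one>\<^bsub>G\<^esub>) \<and>
     (\<forall>i. 1 \<le> i \<and> i \<le> n - 1 \<and> i \<noteq> 2 \<longrightarrow> (s 0 \<otimes>\<^bsub>G\<^esub> s i) [^]\<^bsub>G\<^esub> (2::nat) = \<one>\<^bsub>G\<^esub>)"

definition tD :: "('a, 'b) monoid_scheme \<Rightarrow> (nat \<Rightarrow> 'a) \<Rightarrow> nat \<Rightarrow> 'a" where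
  "tD G s k = gprod G (map s [1..<k])"

definition wD :: "('a, 'b) monoid_scheme \<Rightarrow> (nat \<Rightarrow> 'a) \<Rightarrow> nat \<Rightarrow> 'a" where
  "wD G s k = gprod G (map s (rev [1..<k+1] @ [0] @ [2..<k+1]))"

end

theory Submission
  imports Defs "HOL-Combinatorics.Transposition"
begin

text \<open>
  For \<open>b < q\<close> put \<open>W(0) = w\<^sub>q\<close> and \<open>W(b) = w\<^sub>b w\<^sub>q\<close> (\<open>w_orbit q b\<close> below). Conjugation by
  \<open>s\<^sub>j\<^sub>+\<^sub>1\<close> permutes \<open>W(0), \<dots>, W(q - 1)\<close> as the transposition \<open>(j j+1)\<close> permutes \<open>0, \<dots>, q - 1\<close>;
  for \<open>s\<^sub>1\<close> this rests on \<open>s\<^sub>1 w\<^sub>p = w\<^sub>1 w\<^sub>p s\<^sub>1\<close> and on \<open>w\<^sub>1\<close> commuting with \<open>w\<^sub>p\<close> (\<open>p \<ge> 2\<close>).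
  Hence \<open>t\<^sub>k = s\<^sub>1 \<cdots> s\<^sub>k\<^sub>-\<^sub>1\<close> (\<open>k \<le> q\<close>) acts on \<open>W(0), \<dots>, W(k - 1)\<close> as the cycle
  \<open>b \<mapsto> b + 1 mod k\<close>. Reading \<open>\<pi>\<^sub>1\<close> from the right, \<open>W(0) = w\<^sub>q\<close> is moved to \<open>W(maj mod k\<^sub>1)\<close>:
  every partial sum of exponents met before the leftmost factor is at most \<open>maj - i\<^sub>k\<^sub>1 < k\<^sub>1 \<le> k\<^sub>j\<close>,
  so only that factor, a power of \<open>t\<^sub>k\<^sub>1\<close>, can wrap around, and it does exactly when \<open>maj = k\<^sub>1\<close>.
\<close>

(* Keeps the simplifier from turning 1 into Suc 0, so that facts about s 1 and w 1 rewrite. *)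
declare One_nat_def [simp del]

lemma gprod_Nil [simp]: "gprod G [] = \<one>\<^bsub>G\<^esub>"
  by (simp add: gprod_def)

lemma gprod_Cons [simp]: "gprod G (x # xs) = x \<otimes>\<^bsub>G\<^esub> gprod G xs"
  by (simp add: gprod_def)

lemma (in monoid) gprod_closed: "set xs \<subseteq> carrier G \<Longrightarrow> gprod G xs \<in> carrier G"
  by (induction xs) auto

lemma (in monoid) gprod_append:
  "set xs \<subseteq> carrier G \<Longrightarrow> set ys \<subseteq> carrier G \<Longrightarrow> gprod G (xs @ ys) = gprod G xs \<otimes> gprod G ys"
  by (induction xs) (auto simp: m_assoc gprod_closed)

lemma (in monoid) gprod_snoc:
  "set xs \<subseteq> carrier G \<Longrightarrow> y \<in> carrier G \<Longrightarrow> gprod G (xs @ [y]) = gprod G xs \<otimes> y"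
  by (simp add: gprod_append)

lemma (in monoid) mult_eq_prefix2:
  "x \<otimes> y = z \<Longrightarrow> x \<in> carrier G \<Longrightarrow> y \<in> carrier G \<Longrightarrow> u \<in> carrier G \<Longrightarrow> x \<otimes> (y \<otimes> u) = z \<otimes> u"
  by (simp add: m_assoc[symmetric])

lemma (in monoid) mult_eq_prefix3:
  "x \<otimes> y \<otimes> v = z \<Longrightarrow> x \<in> carrier G \<Longrightarrow> y \<in> carrier G \<Longrightarrow> v \<in> carrier G \<Longrightarrow> u \<in> carrier G
   \<Longrightarrow> x \<otimes> (y \<otimes> (v \<otimes> u)) = z \<otimes> u"
  by (simp add: m_assoc[symmetric])

lemma (in group) involution_cancel_left:
  "x \<otimes> x = \<one> \<Longrightarrow> x \<in> carrier G \<Longrightarrow> y \<in> carrier G \<Longrightarrow> x \<otimes> (x \<otimes> y) = y"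
  by (simp add: m_assoc[symmetric])

lemma (in group) involution_inv: "x \<in> carrier G \<Longrightarrow> x \<otimes> x = \<one> \<Longrightarrow> inv x = x"
  by (rule inv_equality)

lemma (in group) involutions_commute:
  assumes "x \<in> carrier G" "y \<in> carrier G" "x \<otimes> x = \<one>" "y \<otimes> y = \<one>" "(x \<otimes> y) [^] (2::nat) = \<one>"
  shows "x \<otimes> y = y \<otimes> x"
proof -
  have "x \<otimes> y = inv (x \<otimes> y)"
    using assms by (intro involution_inv[symmetric]) (auto simp: numeral_2_eq_2)
  also have "\<dots> = y \<otimes> x"
    using assms by (simp add: inv_mult_group involution_inv)
  finally show ?thesis .
qed

lemma (in group) involutions_braid:
  assumes "x \<in> carrier G" "y \<in> carrier G" "x \<otimes> x = \<one>" "y \<otimes> y = \<one>" "(x \<otimes> y) [^] (3::nat) = \<one>"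
  shows "x \<otimes> y \<otimes> x = y \<otimes> x \<otimes> y"
proof -
  have "x \<otimes> y \<otimes> x \<otimes> (y \<otimes> x \<otimes> y) = (x \<otimes> y) [^] (3::nat)"
    using assms by (simp add: numeral_3_eq_3 m_assoc)
  then have "x \<otimes> y \<otimes> x = inv (y \<otimes> x \<otimes> y)"
    using assms by (intro inv_equality[symmetric]) auto
  also have "\<dots> = y \<otimes> x \<otimes> y"
    using assms by (simp add: inv_mult_group involution_inv m_assoc)
  finally show ?thesis .
qed

lemma lift_Suc_mono_le_upto:
  fixes f :: "nat \<Rightarrow> 'a::order"
  assumes "\<forall>j. j + 1 < m \<longrightarrow> f j < f (j + 1)" "j \<le> l" "l < m"
  shows "f j \<le> f l"
proof (rule lift_Suc_mono_le_ivl[of "{j. Suc j < m}" f])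
  show "f j \<le> f (Suc j)" if "j \<in> {j. Suc j < m}" for j
    using that assms(1) by (simp add: Suc_eq_plus1 less_imp_le)
qed (use assms(2,3) in auto)

lemma foldr_adjacent_transpose_less:
  "\<forall>j\<in>set L. Suc j < q \<Longrightarrow> b < q \<Longrightarrow> foldr (\<lambda>j. transpose j (Suc j)) L b < q"
  by (induction L) (auto simp: transpose_def)

lemma foldr_adjacent_transpose_upt:
  "foldr (\<lambda>j. transpose j (Suc j)) [0..<k] b = (if b < k then Suc b else if b = k then 0 else b)"
  by (induction k arbitrary: b) (auto simp: transpose_def)

locale Dn_coxeter = group G for G (structure) +
  fixes n :: nat and s :: "nat \<Rightarrow> 'a"
  assumes Dn_gens: "Dn_gens G n s"
begin

lemma s_closed [simp]: "i \<le> n - 1 \<Longrightarrow> s i \<in> carrier G"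
  using Dn_gens unfolding Dn_gens_def by blast

lemma s_involution: "i \<le> n - 1 \<Longrightarrow> s i \<otimes> s i = \<one>"
  using Dn_gens unfolding Dn_gens_def by blast

lemma s_cancel_left: "i \<le> n - 1 \<Longrightarrow> x \<in> carrier G \<Longrightarrow> s i \<otimes> (s i \<otimes> x) = x"
  by (simp add: involution_cancel_left s_involution)

lemma s_commute:
  assumes "1 \<le> i" "i \<le> n - 1" "1 \<le> j" "j \<le> n - 1" "i + 2 \<le> j \<or> j + 2 \<le> i"
  shows "s i \<otimes> s j = s j \<otimes> s i"
proof -
  have "(s i \<otimes> s j) [^] (2::nat) = \<one> \<or> (s j \<otimes> s i) [^] (2::nat) = \<one>"
    using Dn_gens assms unfolding Dn_gens_def by auto
  then show ?thesis
    using assms involutions_commute[of "s i" "s j"] involutions_commute[of "s j" "s i"]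
    by (auto simp: s_involution)
qed

lemma s0_commute: "1 \<le> i \<Longrightarrow> i \<le> n - 1 \<Longrightarrow> i \<noteq> 2 \<Longrightarrow> s 0 \<otimes> s i = s i \<otimes> s 0"
  using Dn_gens by (intro involutions_commute) (auto simp: s_involution Dn_gens_def)

lemma s_braid: "1 \<le> i \<Longrightarrow> Suc i \<le> n - 1 \<Longrightarrow> s i \<otimes> s (Suc i) \<otimes> s i = s (Suc i) \<otimes> s i \<otimes> s (Suc i)"
  using Dn_gens by (intro involutions_braid) (auto simp: s_involution Dn_gens_def One_nat_def)

lemma s0_s2_braid: "2 \<le> n - 1 \<Longrightarrow> s 0 \<otimes> s 2 \<otimes> s 0 = s 2 \<otimes> s 0 \<otimes> s 2"
  using Dn_gens by (intro involutions_braid) (auto simp: s_involution Dn_gens_def)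

abbreviation w :: "nat \<Rightarrow> 'a" where "w \<equiv> wD G s"

abbreviation t :: "nat \<Rightarrow> 'a" where "t \<equiv> tD G s"

lemma w_closed [simp]: "p \<le> n - 1 \<Longrightarrow> w p \<in> carrier G"
  unfolding wD_def by (rule gprod_closed) auto

lemma t_closed [simp]: "k \<le> n \<Longrightarrow> t k \<in> carrier G"
  unfolding tD_def by (rule gprod_closed) auto

lemma w_1: "1 \<le> n - 1 \<Longrightarrow> w 1 = s 1 \<otimes> s 0"
  by (simp add: wD_def numeral_2_eq_2 One_nat_def)

lemma w_Suc:
  assumes "1 \<le> p" "Suc p \<le> n - 1"
  shows "w (Suc p) = s (Suc p) \<otimes> w p \<otimes> s (Suc p)"
proof -
  let ?ws = "map s (rev [1..<p + 1] @ [0] @ [2..<p + 1])"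
  have ws_closed: "set ?ws \<subseteq> carrier G"
    using assms by auto
  have word: "rev [1..<Suc p + 1] @ [0] @ [2..<Suc p + 1] = Suc p # (rev [1..<p + 1] @ [0] @ [2..<p + 1]) @ [Suc p]"
    using assms by (simp add: One_nat_def)
  have "w (Suc p) = gprod G (s (Suc p) # ?ws @ [s (Suc p)])"
    unfolding wD_def word by simp
  also have "\<dots> = s (Suc p) \<otimes> (w p \<otimes> s (Suc p))"
    using assms by (simp only: gprod_Cons gprod_snoc[OF ws_closed] s_closed wD_def)
  finally show ?thesis
    using assms by (simp add: m_assoc)
qed

lemma w_involution: "1 \<le> p \<Longrightarrow> p \<le> n - 1 \<Longrightarrow> w p \<otimes> w p = \<one>"
proof (induction p rule: dec_induct)
  case base
  have commute: "s 0 \<otimes> s 1 = s 1 \<otimes> s 0"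
    using base by (intro s0_commute) auto
  show ?case
    using base
    by (simp add: w_1 mult_eq_prefix2[OF commute] m_assoc s_cancel_left s_involution)
next
  case (step p)
  then show ?case
    by (simp add: w_Suc m_assoc s_cancel_left involution_cancel_left s_involution)
qed

lemma s_w_commute:
  assumes "1 \<le> p" "p \<le> n - 1" "2 \<le> j" "j \<le> n - 1" "j \<noteq> p" "j \<noteq> p + 1"
  shows "s j \<otimes> w p = w p \<otimes> s j"
  using assms
proof (induction p arbitrary: j rule: less_induct)
  case (less p)
  show ?case
  proof (cases "p = 1")
    case True
    have commute: "s j \<otimes> s 1 = s 1 \<otimes> s j" "s j \<otimes> s 0 = s 0 \<otimes> s j"
      using less.prems True s0_commute[of j] by (auto intro: s_commute)
    show ?thesis
      using less.prems True
      by (simp add: w_1 mult_eq_prefix2[OF commute(1)] commute(2) m_assoc)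
  next
    case False
    then obtain r where p: "p = Suc r" "1 \<le> r"
      using less.prems by (cases p) auto
    have w_p: "w p = s p \<otimes> w r \<otimes> s p"
      using p less.prems w_Suc by simp
    have closed: "s p \<in> carrier G" "s j \<in> carrier G" "w r \<in> carrier G"
      using less.prems p by auto
    show ?thesis
    proof (cases "j = r")
      case False
      have commute: "s j \<otimes> s p = s p \<otimes> s j"
        using less.prems p False by (intro s_commute) auto
      have IH: "s j \<otimes> w r = w r \<otimes> s j"
        using less.prems p False by (intro less.IH) auto
      show ?thesis
        using closed
        by (simp add: w_p m_assoc mult_eq_prefix2[OF commute] mult_eq_prefix2[OF IH] commute)
    next
      case True
      then obtain u where r: "r = Suc u" "1 \<le> u"
        using less.prems by (cases r) auto
      have w_r: "w r = s r \<otimes> w u \<otimes> s r"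
        using p r less.prems w_Suc by simp
      have IH: "s p \<otimes> w u = w u \<otimes> s p"
        using less.prems p r by (intro less.IH) auto
      have braid: "s r \<otimes> s p \<otimes> s r = s p \<otimes> s r \<otimes> s p"
        using s_braid[of r] p less.prems by simp
      have closed_u: "s r \<in> carrier G" "w u \<in> carrier G"
        using less.prems p r by auto
      have "s j \<otimes> w p = s r \<otimes> (s p \<otimes> (s r \<otimes> (w u \<otimes> (s r \<otimes> s p))))"
        using closed closed_u True by (simp add: w_p w_r m_assoc)
      also have "\<dots> = s p \<otimes> (s r \<otimes> (s p \<otimes> (w u \<otimes> (s r \<otimes> s p))))"
        using closed closed_u by (simp add: mult_eq_prefix3[OF braid] m_assoc)
      also have "\<dots> = s p \<otimes> (s r \<otimes> (w u \<otimes> (s p \<otimes> s r \<otimes> s p)))"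
        using closed closed_u by (simp add: mult_eq_prefix2[OF IH] m_assoc)
      also have "\<dots> = w p \<otimes> s j"
        using closed closed_u True by (simp add: braid[symmetric] w_p w_r m_assoc)
      finally show ?thesis .
    qed
  qed
qed

lemma s_Suc_w: "1 \<le> j \<Longrightarrow> Suc j \<le> n - 1 \<Longrightarrow> s (Suc j) \<otimes> w j = w (Suc j) \<otimes> s (Suc j)"
  by (simp add: w_Suc m_assoc s_involution)

lemma s_Suc_w_Suc: "1 \<le> j \<Longrightarrow> Suc j \<le> n - 1 \<Longrightarrow> s (Suc j) \<otimes> w (Suc j) = w j \<otimes> s (Suc j)"
  by (simp add: w_Suc m_assoc s_cancel_left)

lemma s1_w1_commute: "1 \<le> n - 1 \<Longrightarrow> s 1 \<otimes> w 1 = w 1 \<otimes> s 1"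
  using s0_commute[of 1] by (simp add: w_1 m_assoc s_cancel_left)

lemma s1_w2:
  assumes "2 \<le> n - 1"
  shows "s 1 \<otimes> w 2 = w 1 \<otimes> w 2 \<otimes> s 1"
proof -
  have closed: "s 0 \<in> carrier G" "s 1 \<in> carrier G" "s 2 \<in> carrier G"
    using assms by auto
  have w_2: "w 2 = s 2 \<otimes> (s 1 \<otimes> (s 0 \<otimes> s 2))"
    using w_Suc[of 1] assms by (simp add: w_1 m_assoc numeral_2_eq_2)
  have commute: "s 1 \<otimes> s 0 = s 0 \<otimes> s 1"
    using s0_commute[of 1] assms by simp
  have braid: "s 1 \<otimes> (s 2 \<otimes> s 1) = s 2 \<otimes> (s 1 \<otimes> s 2)"
    using s_braid[of 1] assms by (simp add: m_assoc numeral_2_eq_2)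
  have "s 0 \<otimes> (s 2 \<otimes> (s 1 \<otimes> (s 0 \<otimes> (s 2 \<otimes> s 1))))
      = s 0 \<otimes> (s 2 \<otimes> (s 0 \<otimes> (s 1 \<otimes> (s 2 \<otimes> s 1))))"
    using closed by (simp add: mult_eq_prefix2[OF commute] m_assoc)
  also have "\<dots> = s 2 \<otimes> (s 0 \<otimes> (s 2 \<otimes> (s 1 \<otimes> (s 2 \<otimes> s 1))))"
    using closed by (simp add: mult_eq_prefix3[OF s0_s2_braid[OF assms]] m_assoc)
  also have "\<dots> = s 2 \<otimes> (s 0 \<otimes> (s 1 \<otimes> s 2))"
    using closed assms by (simp add: braid s_cancel_left)
  also have "\<dots> = w 2"
    using closed by (simp add: w_2 mult_eq_prefix2[OF commute[symmetric]] m_assoc)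
  finally show ?thesis
    using closed assms by (simp add: w_1 w_2 m_assoc)
qed

lemma s1_w:
  assumes "2 \<le> q" "q \<le> n - 1"
  shows "s 1 \<otimes> w q = w 1 \<otimes> w q \<otimes> s 1"
  using assms
proof (induction q rule: dec_induct)
  case base
  then show ?case by (rule s1_w2)
next
  case (step q)
  have closed: "s 1 \<in> carrier G" "s (Suc q) \<in> carrier G" "w 1 \<in> carrier G" "w q \<in> carrier G"
    using step by auto
  have commute: "s 1 \<otimes> s (Suc q) = s (Suc q) \<otimes> s 1"
    using step by (intro s_commute) auto
  have w1_commute: "s (Suc q) \<otimes> w 1 = w 1 \<otimes> s (Suc q)"
    using step by (intro s_w_commute) auto
  have w_Suc_q: "w (Suc q) = s (Suc q) \<otimes> (w q \<otimes> s (Suc q))"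
    using w_Suc[of q] step by (simp add: m_assoc)
  have IH: "s 1 \<otimes> w q = w 1 \<otimes> w q \<otimes> s 1"
    using step by simp
  have "s 1 \<otimes> w (Suc q) = s (Suc q) \<otimes> (s 1 \<otimes> w q \<otimes> s (Suc q))"
    using closed by (simp add: w_Suc_q mult_eq_prefix2[OF commute] m_assoc)
  also have "\<dots> = s (Suc q) \<otimes> w 1 \<otimes> (w q \<otimes> (s (Suc q) \<otimes> s 1))"
    using closed by (simp add: IH commute m_assoc)
  also have "\<dots> = w 1 \<otimes> w (Suc q) \<otimes> s 1"
    using closed by (simp add: w_Suc_q w1_commute m_assoc)
  finally show ?case .
qed

lemma w_w1_commute:
  assumes "2 \<le> q" "q \<le> n - 1"
  shows "w q \<otimes> w 1 = w 1 \<otimes> w q"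
proof -
  have closed: "s 1 \<in> carrier G" "w 1 \<in> carrier G" "w q \<in> carrier G"
    using assms by auto
  have conj: "w 1 \<otimes> w q = s 1 \<otimes> (w q \<otimes> s 1)"
    using closed assms
    by (simp add: mult_eq_prefix2[OF s1_w[OF assms]] m_assoc s_involution)
  have "(w 1 \<otimes> w q) [^] (2::nat) = s 1 \<otimes> (w q \<otimes> s 1) \<otimes> (s 1 \<otimes> (w q \<otimes> s 1))"
    using closed by (simp add: conj numeral_2_eq_2)
  also have "\<dots> = \<one>"
    using closed assms
    by (simp add: m_assoc s_cancel_left involution_cancel_left w_involution s_involution)
  finally show ?thesis
    using closed assms by (intro involutions_commute[symmetric]) (auto simp: w_involution)
qed

definition w_orbit :: "nat \<Rightarrow> nat \<Rightarrow> 'a" where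
  "w_orbit q b = (if b = 0 then w q else w b \<otimes> w q)"

lemma w_orbit_0 [simp]: "w_orbit q 0 = w q"
  by (simp add: w_orbit_def)

lemma w_orbit_mod: "1 \<le> a \<Longrightarrow> a \<le> k \<Longrightarrow> w_orbit q (a mod k) = (if a = k then w q else w a \<otimes> w q)"
  by (simp add: w_orbit_def)

lemma w_orbit_closed [simp]: "q \<le> n - 1 \<Longrightarrow> b < q \<Longrightarrow> w_orbit q b \<in> carrier G"
  unfolding w_orbit_def by auto

lemma s1_w_orbit:
  assumes "2 \<le> q" "q \<le> n - 1" "b < q"
  shows "s 1 \<otimes> w_orbit q b = w_orbit q (transpose 0 1 b) \<otimes> s 1"
proof -
  have s1_wq: "s 1 \<otimes> w q = w 1 \<otimes> w q \<otimes> s 1"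
    using s1_w assms by simp
  have w1_involution: "w 1 \<otimes> w 1 = \<one>"
    using w_involution[of 1] assms by simp
  consider "b = 0" | "b = 1" | "2 \<le> b"
    using assms by force
  then show ?thesis
  proof cases
    case 1
    then show ?thesis
      using assms by (simp add: w_orbit_def s1_wq)
  next
    case 2
    then show ?thesis
      using assms
      by (simp add: w_orbit_def mult_eq_prefix2[OF s1_w1_commute] s1_wq m_assoc
          involution_cancel_left[OF w1_involution])
  next
    case 3
    have s1_wb: "s 1 \<otimes> w b = w 1 \<otimes> w b \<otimes> s 1"
      using s1_w assms 3 by simp
    have wb_w1: "w b \<otimes> w 1 = w 1 \<otimes> w b"
      using w_w1_commute assms 3 by simp
    show ?thesis
      using assms 3
      by (simp add: w_orbit_def mult_eq_prefix2[OF s1_wb] s1_wq mult_eq_prefix2[OF wb_w1]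
          involution_cancel_left[OF w1_involution] m_assoc)
  qed
qed

lemma s_Suc_w_orbit:
  assumes "1 \<le> j" "Suc j < q" "q \<le> n - 1" "b < q"
  shows "s (Suc j) \<otimes> w_orbit q b = w_orbit q (transpose j (Suc j) b) \<otimes> s (Suc j)"
proof -
  have s_wq: "s (Suc j) \<otimes> w q = w q \<otimes> s (Suc j)"
    using assms by (intro s_w_commute) auto
  consider "b = 0" | "b = j" | "b = Suc j" | "1 \<le> b" "b \<noteq> j" "b \<noteq> Suc j"
    using assms by force
  then show ?thesis
  proof cases
    case 1
    then show ?thesis
      using assms by (simp add: w_orbit_def s_wq)
  next
    case 2
    then show ?thesis
      using assms
      by (simp add: w_orbit_def mult_eq_prefix2[OF s_Suc_w] s_wq m_assoc)
  next
    case 3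
    then show ?thesis
      using assms
      by (simp add: w_orbit_def mult_eq_prefix2[OF s_Suc_w_Suc] s_wq m_assoc)
  next
    case 4
    have s_wb: "s (Suc j) \<otimes> w b = w b \<otimes> s (Suc j)"
      using assms 4 by (intro s_w_commute) auto
    show ?thesis
      using assms 4 by (simp add: w_orbit_def mult_eq_prefix2[OF s_wb] s_wq m_assoc)
  qed
qed

lemma s_w_orbit:
  assumes "Suc j < q" "q \<le> n - 1" "b < q"
  shows "s (Suc j) \<otimes> w_orbit q b = w_orbit q (transpose j (Suc j) b) \<otimes> s (Suc j)"
proof (cases "j = 0")
  case True
  then show ?thesis
    using s1_w_orbit assms by (simp add: One_nat_def)
next
  case False
  then show ?thesis
    using s_Suc_w_orbit assms by simp
qed

lemma word_w_orbit:
  assumes "\<forall>j\<in>set L. Suc j < q" "q \<le> n - 1" "b < q"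
  shows "gprod G (map (\<lambda>j. s (Suc j)) L) \<otimes> w_orbit q b
       = w_orbit q (foldr (\<lambda>j. transpose j (Suc j)) L b) \<otimes> gprod G (map (\<lambda>j. s (Suc j)) L)"
  using assms
proof (induction L)
  case Nil
  then show ?case by simp
next
  case (Cons j L)
  let ?c = "foldr (\<lambda>j. transpose j (Suc j)) L b"
  have closed: "s (Suc j) \<in> carrier G" "gprod G (map (\<lambda>j. s (Suc j)) L) \<in> carrier G"
    "w_orbit q b \<in> carrier G" "w_orbit q ?c \<in> carrier G"
    using Cons.prems foldr_adjacent_transpose_less[of L q b] by (fastforce intro!: gprod_closed)+
  have IH: "gprod G (map (\<lambda>j. s (Suc j)) L) \<otimes> w_orbit q b = w_orbit q ?c \<otimes> gprod G (map (\<lambda>j. s (Suc j)) L)"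
    using Cons by simp
  have step: "s (Suc j) \<otimes> w_orbit q ?c = w_orbit q (transpose j (Suc j) ?c) \<otimes> s (Suc j)"
    using Cons.prems foldr_adjacent_transpose_less[of L q b] by (intro s_w_orbit) auto
  show ?case
    using closed Cons.prems foldr_adjacent_transpose_less[of "j # L" q b]
    by (simp add: m_assoc IH mult_eq_prefix2[OF step])
qed

lemma t_eq_word: "t k = gprod G (map (\<lambda>j. s (Suc j)) [0..<k - 1])"
proof -
  have "[1..<k] = map Suc [0..<k - 1]"
    by (cases k) (simp_all add: map_Suc_upt One_nat_def)
  then show ?thesis
    by (simp add: tD_def comp_def)
qed

lemma t_w_orbit:
  assumes "k \<le> q" "q \<le> n - 1" "b < k"
  shows "t k \<otimes> w_orbit q b = w_orbit q (Suc b mod k) \<otimes> t k"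
proof -
  have "foldr (\<lambda>j. transpose j (Suc j)) [0..<k - 1] b = Suc b mod k"
    using assms by (auto simp: foldr_adjacent_transpose_upt)
  moreover have "\<forall>j\<in>set [0..<k - 1]. Suc j < q"
    using assms by auto
  ultimately show ?thesis
    using word_w_orbit[of "[0..<k - 1]" q b] assms by (simp add: t_eq_word)
qed

lemma t_pow_w_orbit:
  assumes "k \<le> q" "q \<le> n - 1" "b < k"
  shows "t k [^] i \<otimes> w_orbit q b = w_orbit q ((b + i) mod k) \<otimes> t k [^] i"
  using assms
proof (induction i arbitrary: b)
  case 0
  then show ?case by simp
next
  case (Suc i)
  have "\<And>c. c mod k < q"
    using Suc.prems by (intro less_le_trans[OF mod_less_divisor]) auto
  then have closed: "t k \<in> carrier G" "t k [^] i \<in> carrier G" "w_orbit q b \<in> carrier G"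
    "\<And>c. w_orbit q (c mod k) \<in> carrier G"
    using Suc.prems by auto
  have "t k [^] Suc i \<otimes> w_orbit q b = t k [^] i \<otimes> (t k \<otimes> w_orbit q b)"
    using closed by (simp add: m_assoc)
  also have "\<dots> = t k [^] i \<otimes> w_orbit q (Suc b mod k) \<otimes> t k"
    using closed Suc.prems by (simp add: t_w_orbit m_assoc)
  also have "\<dots> = w_orbit q ((Suc b mod k + i) mod k) \<otimes> t k [^] Suc i"
    using closed Suc by (simp add: m_assoc)
  also have "(Suc b mod k + i) mod k = (b + Suc i) mod k"
    by (simp add: mod_add_left_eq)
  finally show ?case .
qed

lemma t_pow_prod_w_orbit:
  assumes "\<forall>j\<in>set js. k j \<le> q \<and> b + sum_list (map i js) < k j" "q \<le> n - 1" "b < q"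
  shows "gprod G (map (\<lambda>j. t (k j) [^] i j) js) \<otimes> w_orbit q b
       = w_orbit q (b + sum_list (map i js)) \<otimes> gprod G (map (\<lambda>j. t (k j) [^] i j) js)"
  using assms
proof (induction js)
  case Nil
  then show ?case by simp
next
  case (Cons j js)
  let ?P = "gprod G (map (\<lambda>j. t (k j) [^] i j) js)"
  have closed: "t (k j) [^] i j \<in> carrier G" "?P \<in> carrier G" "w_orbit q b \<in> carrier G"
    "w_orbit q (b + sum_list (map i js)) \<in> carrier G"
    "w_orbit q (b + sum_list (map i (j # js))) \<in> carrier G"
    using Cons.prems by (fastforce intro!: gprod_closed)+
  have "\<forall>j'\<in>set js. k j' \<le> q \<and> b + sum_list (map i js) < k j'"
    using Cons.prems by fastforce
  then have IH: "?P \<otimes> w_orbit q b = w_orbit q (b + sum_list (map i js)) \<otimes> ?P"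
    using Cons by simp
  have step: "t (k j) [^] i j \<otimes> w_orbit q (b + sum_list (map i js))
      = w_orbit q (b + sum_list (map i (j # js))) \<otimes> t (k j) [^] i j"
    using Cons.prems t_pow_w_orbit[of "k j" q "b + sum_list (map i js)" "i j"] by (simp add: ac_simps)
  show ?case
    using closed by (simp add: m_assoc IH mult_eq_prefix2[OF step])
qed

lemma t_pow_prod_w_orbit_mod:
  assumes "\<forall>j\<in>set js. k j \<le> q \<and> b + sum_list (map i js) < k j"
    and "k j\<^sub>0 \<le> q" "b + sum_list (map i js) < k j\<^sub>0" "q \<le> n - 1" "b < q"
  shows "gprod G (map (\<lambda>j. t (k j) [^] i j) (j\<^sub>0 # js)) \<otimes> w_orbit q b
       = w_orbit q ((b + sum_list (map i (j\<^sub>0 # js))) mod k j\<^sub>0)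
           \<otimes> gprod G (map (\<lambda>j. t (k j) [^] i j) (j\<^sub>0 # js))"
proof -
  let ?P = "gprod G (map (\<lambda>j. t (k j) [^] i j) js)"
  let ?c = "b + sum_list (map i js)"
  have "(?c + i j\<^sub>0) mod k j\<^sub>0 < q"
    using assms by (intro less_le_trans[OF mod_less_divisor]) auto
  then have closed: "t (k j\<^sub>0) [^] i j\<^sub>0 \<in> carrier G" "?P \<in> carrier G" "w_orbit q b \<in> carrier G"
    "w_orbit q ?c \<in> carrier G" "w_orbit q ((?c + i j\<^sub>0) mod k j\<^sub>0) \<in> carrier G"
    using assms by (fastforce intro!: gprod_closed)+
  have tail: "?P \<otimes> w_orbit q b = w_orbit q ?c \<otimes> ?P"
    using t_pow_prod_w_orbit assms by blast
  have head: "t (k j\<^sub>0) [^] i j\<^sub>0 \<otimes> w_orbit q ?c = w_orbit q ((?c + i j\<^sub>0) mod k j\<^sub>0) \<otimes> t (k j\<^sub>0) [^] i j\<^sub>0"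
    using assms by (intro t_pow_w_orbit) auto
  show ?thesis
    using closed by (simp add: m_assoc tail mult_eq_prefix2[OF head] ac_simps)
qed

end

theorem mainTheorem7:
  fixes G :: "('a, 'b) monoid_scheme" and s :: "nat \<Rightarrow> 'a"
    and n m q :: nat and k i :: "nat \<Rightarrow> nat"
  assumes "group G"
    and "Dn_gens G n s"
    and "n \<ge> 2"
    and "m \<ge> 1"
    and "2 \<le> k 0"
    and "\<forall>j. j + 1 < m \<longrightarrow> k j < k (j + 1)"
    and "k (m - 1) \<le> n"
    and "\<forall>j<m. 1 \<le> i j \<and> i j \<le> k j - 1"
    and "(\<Sum>j<m. i j) \<le> k 0"
    and "k (m - 1) \<le> q" and "q \<le> n - 1"
  shows "let maj = (\<Sum>j<m. i j);
             \<pi>\<^sub>1 = gprod G (map (\<lambda>j. tD G s (k j) [^]\<^bsub>G\<^esub> i j) [0..<m])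
         in (if maj = k 0
             then \<pi>\<^sub>1 \<otimes>\<^bsub>G\<^esub> wD G s q = wD G s q \<otimes>\<^bsub>G\<^esub> \<pi>\<^sub>1
             else \<pi>\<^sub>1 \<otimes>\<^bsub>G\<^esub> wD G s q = wD G s maj \<otimes>\<^bsub>G\<^esub> wD G s q \<otimes>\<^bsub>G\<^esub> \<pi>\<^sub>1)"
proof -
  interpret Dn_coxeter G n s
    using assms(1,2) by (simp add: Dn_coxeter_def Dn_coxeter_axioms_def)
  define maj where "maj = (\<Sum>j<m. i j)"
  have k_bounds: "k 0 \<le> k j \<and> k j \<le> q" if "j < m" for j
  proof -
    have "k 0 \<le> k j" "k j \<le> k (m - 1)"
      using that assms(4) by (auto intro!: lift_Suc_mono_le_upto[OF assms(6)])
    then show ?thesis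
      using assms(10) by simp
  qed
  have upt_m: "[0..<m] = 0 # [1..<m]"
    using assms(4) by (simp add: upt_conv_Cons One_nat_def)
  have "maj = sum_list (map i [0..<m])"
    by (simp add: maj_def interv_sum_list_conv_sum_set_nat atLeast0LessThan)
  then have maj_split: "maj = i 0 + sum_list (map i [1..<m])"
    by (simp add: upt_m)
  have "1 \<le> i 0" "maj \<le> k 0"
    using assms(4,8,9) by (auto simp: maj_def)
  then have "\<forall>j\<in>set [1..<m]. k j \<le> q \<and> 0 + sum_list (map i [1..<m]) < k j"
    "k 0 \<le> q" "0 + sum_list (map i [1..<m]) < k 0" "0 < q"
    using k_bounds maj_split assms(4,5) by (fastforce intro: less_le_trans)+
  then have "gprod G (map (\<lambda>j. t (k j) [^]\<^bsub>G\<^esub> i j) [0..<m]) \<otimes>\<^bsub>G\<^esub> w_orbit q 0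
      = w_orbit q (maj mod k 0) \<otimes>\<^bsub>G\<^esub> gprod G (map (\<lambda>j. t (k j) [^]\<^bsub>G\<^esub> i j) [0..<m])"
    using t_pow_prod_w_orbit_mod[of "[1..<m]" k q 0 i 0] assms(11) by (simp add: upt_m maj_split)
  then show ?thesis
    using w_orbit_mod[of maj "k 0" q] \<open>1 \<le> i 0\<close> \<open>maj \<le> k 0\<close> maj_split
    by (simp add: Let_def maj_def[symmetric])
qed

end
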